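(* Let $\theta\in\mathbb{F}_{q^3}^*$. The pencil of lines $T\mathcal S_\theta=\{TX: X\in\mathcal S_\theta\}$ consists entirely of Type II lines if $N(\theta)=1$, and otherwise consists entirely of Type III lines.
   Context: Let $q$ be a prime power, $\mathbb{F}_{q^3}^*=\mathbb{F}_{q^3}\setminus\{0\}$, and $N(x)=x^{q^2+q+1}$ the norm from $\mathbb{F}_{q^3}$ to $\mathbb{F}_q$. Points of $\mathrm{PG}(2,q^3)$ have homogeneous coordinates $(x,y,z)$ and lines $[a,b,c]$. Let $\phi$ be the collineation $(x,y,z)\mapsto(z^q,x^q,y^q)$, acting on lines by $[d,e,f]\mapsto[f^q,d^q,e^q]$, whose fixed points form the subplane $\mathcal P_{2,q}=\{(x,x^q,x^{q^2}):x\in\mathbb{F}_{q^3}^*\}$. A line has Type I, II or III according as its $\phi$-orbit is one line, three concurrent lines, or three non-concurrent lines (equivalently it meets $\mathcal P_{2,q}$ in $q+1$, $1$, or $0$ points). Let $T=(0,0,1)$. For $\theta\in\mathbb{F}_{q^3}^*$ let $\mathcal S_\theta=\{(x\theta,x^q,0):x\in\mathbb{F}_{q^3}^*\}$, a set of points on the line $[0,0,1]$. *)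

theory Defs
  imports Main "HOL-Computational_Algebra.Primes"
begin

text \<open>Homogeneous coordinates of points and lines of PG(2,F) are nonzero triples over
  the field F = F_{q^3} (a finite field type whose cardinality is q^3).\<close>

type_synonym 'a triple = "'a \<times> 'a \<times> 'a"

definition nonzero3 :: "'a::zero triple \<Rightarrow> bool" where
  "nonzero3 v \<longleftrightarrow> v \<noteq> (0, 0, 0)"

definition proj_eq :: "'a::field triple \<Rightarrow> 'a triple \<Rightarrow> bool" where
  "proj_eq u v \<longleftrightarrow> (\<exists>c. c \<noteq> 0 \<and> v = (c * fst u, c * fst (snd u), c * snd (snd u)))"

definition incident :: "'a::field triple \<Rightarrow> 'a triple \<Rightarrow> bool" where
  "incident l P \<longleftrightarrow> fst l * fst P + fst (snd l) * fst (snd P) + snd (snd l) * snd (snd P) = 0"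

definition norm3 :: "nat \<Rightarrow> 'a::field \<Rightarrow> 'a" where
  "norm3 q x = x ^ (q^2 + q + 1)"

definition phi_line :: "nat \<Rightarrow> 'a::field triple \<Rightarrow> 'a triple" where
  "phi_line q l = (snd (snd l) ^ q, fst l ^ q, fst (snd l) ^ q)"

definition concurrent3 :: "'a::field triple \<Rightarrow> 'a triple \<Rightarrow> 'a triple \<Rightarrow> bool" where
  "concurrent3 l1 l2 l3 \<longleftrightarrow>
     (\<exists>P. nonzero3 P \<and> incident l1 P \<and> incident l2 P \<and> incident l3 P)"

definition type_I :: "nat \<Rightarrow> 'a::field triple \<Rightarrow> bool" where
  "type_I q l \<longleftrightarrow> proj_eq l (phi_line q l)"

definition type_II :: "nat \<Rightarrow> 'a::field triple \<Rightarrow> bool" where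
  "type_II q l \<longleftrightarrow> \<not> type_I q l \<and>
     concurrent3 l (phi_line q l) (phi_line q (phi_line q l))"

definition type_III :: "nat \<Rightarrow> 'a::field triple \<Rightarrow> bool" where
  "type_III q l \<longleftrightarrow> \<not> type_I q l \<and>
     \<not> concurrent3 l (phi_line q l) (phi_line q (phi_line q l))"

definition T_pt :: "'a::field triple" where
  "T_pt = (0, 0, 1)"

definition S_theta :: "nat \<Rightarrow> 'a::field \<Rightarrow> 'a triple set" where
  "S_theta q \<theta> = {(x * \<theta>, x ^ q, 0) | x. x \<noteq> 0}"

text \<open>The line TX, for points T \<noteq> X: any (representative of the) line through both.\<close>
definition line_through :: "'a::field triple \<Rightarrow> 'a triple \<Rightarrow> 'a triple \<Rightarrow> bool" where
  "line_through l P Q \<longleftrightarrow> nonzero3 l \<and> incident l P \<and> incident l Q"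

end

theory Submission
  imports Defs
begin

text \<open>A line through \<open>T\<close> and \<open>X = (x\<theta>, x\<^sup>q, 0)\<close> is \<open>[a, b, 0]\<close> with \<open>a \<noteq> 0\<close>. Its
  \<open>\<phi>\<close>-orbit \<open>[a, b, 0], [0, a\<^sup>q, b\<^sup>q], [b^(q\<^sup>2), 0, a^(q\<^sup>2)]\<close> is never a single line, and the three lines
  are concurrent iff their determinant \<open>N(a) + N(b)\<close> vanishes. Applying the norm to the
  incidence \<open>a x \<theta> + b x\<^sup>q = 0\<close> and using \<open>N(x\<^sup>q) = N(x)\<close> gives \<open>N(b) = -N(a) N(\<theta>)\<close>, so the
  determinant is \<open>N(a) (1 - N(\<theta>))\<close>.\<close>

lemma finite_field_power_card:
  fixes x :: "'a::{field,finite}"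
  shows "x ^ card (UNIV :: 'a set) = x"
proof (cases "x = 0")
  case False
  have "x * (\<Prod>y\<in>UNIV-{0}. x * y) = x * x ^ (card (UNIV :: 'a set) - 1) * \<Prod>(UNIV-{0})"
    by (simp add: prod.distrib mult_ac)
  also have "x * x ^ (card (UNIV :: 'a set) - 1) = x ^ card (UNIV :: 'a set)"
    using finite_UNIV_card_ge_0[where ?'a = 'a] by (simp flip: power_Suc)
  also have "(\<Prod>y\<in>UNIV-{0}. x * y) = (\<Prod>y\<in>UNIV-{0}. y)"
    by (rule prod.reindex_bij_witness[of _ "\<lambda>y. y / x" "\<lambda>y. x * y"]) (use False in auto)
  finally show ?thesis
    by simp
qed (use finite_UNIV_card_ge_0[where ?'a = 'a] in auto)

lemma card_finite_field_ge_2: "card (UNIV :: 'a::{field,finite} set) \<ge> 2"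
proof -
  have "card {0::'a, 1} \<le> card (UNIV :: 'a set)"
    by (rule card_mono) auto
  then show ?thesis by simp
qed

lemma norm3_mult: "norm3 q (x * y) = norm3 q x * norm3 q y"
  by (simp add: norm3_def power_mult_distrib)

lemma norm3_minus: "norm3 q (- x) = - norm3 q x"
  by (simp add: norm3_def power2_eq_square)

lemma norm3_eq_0_iff [simp]: "norm3 q x = 0 \<longleftrightarrow> x = 0"
  by (auto simp: norm3_def)

lemma norm3_eq_conjugate_product: "norm3 q x = x * x ^ q * (x ^ q) ^ q"
  by (simp add: norm3_def power_add power2_eq_square power_mult mult_ac)

lemma norm3_power_q:
  fixes x :: "'a::{field,finite}"
  assumes "card (UNIV :: 'a set) = q ^ 3"
  shows "norm3 q (x ^ q) = norm3 q x"
proof -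
  have "norm3 q (x ^ q) = x ^ (q ^ 3) * x ^ (q\<^sup>2 + q)"
    by (simp add: norm3_def flip: power_mult power_add)
       (simp add: algebra_simps power2_eq_square power3_eq_cube)
  also have "\<dots> = norm3 q x"
    using finite_field_power_card[of x] by (simp add: assms norm3_def)
  finally show ?thesis .
qed

lemma line_through_T_pt:
  assumes "line_through l T_pt (u, v, 0)"
  obtains a b where "l = (a, b, 0)" "(a, b) \<noteq> (0, 0)" "a * u + b * v = 0"
  using assms by (cases l) (auto simp: line_through_def incident_def nonzero3_def T_pt_def)

lemma phi_line_zero_coord:
  assumes "q > 0"
  shows "phi_line q (a, b, 0) = (0, a ^ q, b ^ q)"
    and "phi_line q (0, a, b) = (b ^ q, 0, a ^ q)"
  using assms by (simp_all add: phi_line_def)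

lemma not_type_I_through_T:
  assumes "q > 0" "a \<noteq> 0"
  shows "\<not> type_I q (a, b, 0)"
  using assms by (auto simp: type_I_def proj_eq_def phi_line_zero_coord)

lemma concurrent3_phi_orbit_through_T_iff:
  assumes "q > 0" "a \<noteq> 0"
  shows "concurrent3 (a, b, 0) (phi_line q (a, b, 0)) (phi_line q (phi_line q (a, b, 0)))
           \<longleftrightarrow> norm3 q a + norm3 q b = 0"
    (is "?conc \<longleftrightarrow> ?D = 0")
proof
  assume ?conc
  then obtain u v w where P: "(u, v, w) \<noteq> (0, 0, 0)"
    and i1: "a * u + b * v = 0" and i2: "a ^ q * v + b ^ q * w = 0"
    and i3: "(b ^ q) ^ q * u + (a ^ q) ^ q * w = 0"
    using \<open>q > 0\<close> by (auto simp: concurrent3_def nonzero3_def incident_def phi_line_zero_coord)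
  have aq: "a ^ q \<noteq> 0" using \<open>a \<noteq> 0\<close> by simp
  have v: "v = - (b ^ q) * w / a ^ q"
    using i2 aq by (simp add: field_simps eq_neg_iff_add_eq_0)
  have u: "u = b * b ^ q * w / (a * a ^ q)"
    using i1 \<open>a \<noteq> 0\<close> aq unfolding v by (simp add: field_simps eq_neg_iff_add_eq_0)
  have "w * ?D = 0"
    using i3 \<open>a \<noteq> 0\<close> aq unfolding u norm3_eq_conjugate_product by (simp add: field_simps)
  moreover have "w \<noteq> 0"
    using P u v by auto
  ultimately show "?D = 0" by simp
next
  assume D: "?D = 0"
  let ?P = "(b * b ^ q, - a * b ^ q, a * a ^ q)"
  have "nonzero3 ?P" "incident (a, b, 0) ?P" "incident (phi_line q (a, b, 0)) ?P"
    using \<open>a \<noteq> 0\<close> \<open>q > 0\<close> by (simp_all add: nonzero3_def incident_def phi_line_zero_coord algebra_simps)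
  moreover have "incident (phi_line q (phi_line q (a, b, 0))) ?P"
    using D \<open>q > 0\<close> by (simp add: incident_def phi_line_zero_coord norm3_eq_conjugate_product algebra_simps)
  ultimately show ?conc
    unfolding concurrent3_def by blast
qed

lemma norm3_incidence_T_S_theta:
  fixes x :: "'a::{field,finite}"
  assumes "card (UNIV :: 'a set) = q ^ 3" "x \<noteq> 0" "a * (x * \<theta>) + b * x ^ q = 0"
  shows "norm3 q b = - (norm3 q a * norm3 q \<theta>)"
proof -
  have "b * x ^ q = - (a * \<theta> * x)"
    using assms(3) by (simp add: algebra_simps eq_neg_iff_add_eq_0)
  then have "norm3 q (b * x ^ q) = norm3 q (- (a * \<theta> * x))"
    by (rule arg_cong)
  then have "norm3 q b * norm3 q x = - (norm3 q a * norm3 q \<theta>) * norm3 q x"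
    by (simp only: norm3_mult norm3_minus norm3_power_q[OF assms(1)]) simp
  then show ?thesis
    using \<open>x \<noteq> 0\<close> by (metis mult_right_cancel norm3_eq_0_iff)
qed

theorem lemma2p3:
  fixes q :: nat and \<theta> :: "'a::{field,finite}"
  assumes "\<exists>p k. prime p \<and> k > 0 \<and> q = p ^ k"
    and "card (UNIV :: 'a set) = q ^ 3"
    and "\<theta> \<noteq> 0"
  shows "\<forall>X \<in> S_theta q \<theta>. \<forall>l. line_through l T_pt X \<longrightarrow>
           (if norm3 q \<theta> = 1 then type_II q l else type_III q l)"
proof (intro ballI allI impI)
  fix X l
  assume "X \<in> S_theta q \<theta>" "line_through l T_pt X"
  then obtain x where x: "x \<noteq> 0" and line: "line_through l T_pt (x * \<theta>, x ^ q, 0)"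
    by (auto simp: S_theta_def)
  from line obtain a b where l: "l = (a, b, 0)" "(a, b) \<noteq> (0, 0)"
    and incidence: "a * (x * \<theta>) + b * x ^ q = 0"
    by (rule line_through_T_pt)
  have "a \<noteq> 0"
    using l incidence x by auto
  have "q > 0"
    using card_finite_field_ge_2[where 'a = 'a] assms(2) by (cases q) auto
  have "norm3 q a + norm3 q b = norm3 q a * (1 - norm3 q \<theta>)"
    using norm3_incidence_T_S_theta[OF assms(2) x incidence] by (simp add: algebra_simps)
  then show "if norm3 q \<theta> = 1 then type_II q l else type_III q l"
    using \<open>q > 0\<close> \<open>a \<noteq> 0\<close>
    by (simp add: type_II_def type_III_def l not_type_I_through_T concurrent3_phi_orbit_through_T_iff)
qed

end
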